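(* Let $Q$ be a finite right Bol loop of odd order and let $H$ be a subgroup of $N_\lambda(Q)$ of order $3$. Suppose that $T_x(H)\subseteq H$ for all $x\in Q$. Then $H\subseteq C(Q)$, i.e. every element of $H$ commutes with every element of $Q$.
   Context: A loop is a set with a binary multiplication and a two-sided identity $1$ in which all left and right translations $L_x(y)=xy$, $R_x(y)=yx$ are bijections. A loop is right Bol if it satisfies $((xy)z)y=x((yz)y)$ for all $x,y,z$. For $x\in Q$, $T_x=L_x^{-1}R_x$, so $T_x(y)=x\backslash(yx)$. The left nucleus is $N_\lambda(Q)=\{x\in Q: x\cdot yz=xy\cdot z \text{ for all } y,z\in Q\}$. The commutant is $C(Q)=\{x\in Q: xy=yx\text{ for all }y\in Q\}$. *)

theory Defs
  imports Main
begin

definition loop :: "'a set \<Rightarrow> ('a \<Rightarrow> 'a \<Rightarrow> 'a) \<Rightarrow> 'a \<Rightarrow> bool" where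
  "loop Q m e \<longleftrightarrow>
     (\<forall>x\<in>Q. \<forall>y\<in>Q. m x y \<in> Q) \<and> e \<in> Q \<and>
     (\<forall>x\<in>Q. m e x = x \<and> m x e = x) \<and>
     (\<forall>x\<in>Q. bij_betw (\<lambda>y. m x y) Q Q) \<and>
     (\<forall>x\<in>Q. bij_betw (\<lambda>y. m y x) Q Q)"

definition right_bol :: "'a set \<Rightarrow> ('a \<Rightarrow> 'a \<Rightarrow> 'a) \<Rightarrow> bool" where
  "right_bol Q m \<longleftrightarrow>
     (\<forall>x\<in>Q. \<forall>y\<in>Q. \<forall>z\<in>Q. m (m (m x y) z) y = m x (m (m y z) y))"

definition ldiv :: "'a set \<Rightarrow> ('a \<Rightarrow> 'a \<Rightarrow> 'a) \<Rightarrow> 'a \<Rightarrow> 'a \<Rightarrow> 'a" where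
  "ldiv Q m x z = (THE y. y \<in> Q \<and> m x y = z)"

text \<open>T_x = L_x^{-1} R_x, so T_x(y) = x \ (y x).\<close>
definition T_map :: "'a set \<Rightarrow> ('a \<Rightarrow> 'a \<Rightarrow> 'a) \<Rightarrow> 'a \<Rightarrow> 'a \<Rightarrow> 'a" where
  "T_map Q m x y = ldiv Q m x (m y x)"

definition left_nucleus :: "'a set \<Rightarrow> ('a \<Rightarrow> 'a \<Rightarrow> 'a) \<Rightarrow> 'a set" where
  "left_nucleus Q m = {x \<in> Q. \<forall>y\<in>Q. \<forall>z\<in>Q. m x (m y z) = m (m x y) z}"

definition commutant :: "'a set \<Rightarrow> ('a \<Rightarrow> 'a \<Rightarrow> 'a) \<Rightarrow> 'a set" where
  "commutant Q m = {x \<in> Q. \<forall>y\<in>Q. m x y = m y x}"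

definition subloop_group :: "'a set \<Rightarrow> ('a \<Rightarrow> 'a \<Rightarrow> 'a) \<Rightarrow> 'a \<Rightarrow> 'a set \<Rightarrow> bool" where
  "subloop_group Q m e H \<longleftrightarrow>
     H \<subseteq> Q \<and> e \<in> H \<and> (\<forall>x\<in>H. \<forall>y\<in>H. m x y \<in> H) \<and>
     (\<forall>x\<in>H. \<forall>y\<in>H. \<forall>z\<in>H. m x (m y z) = m (m x y) z) \<and>
     (\<forall>x\<in>H. \<exists>y\<in>H. m x y = e \<and> m y x = e)"

end

theory Submission
  imports Defs
begin

text \<open>
  Let \<open>h \<in> H\<close> with \<open>h \<noteq> 1\<close> and put \<open>g = h\<^sup>2\<close>, so \<open>H = {1, h, g}\<close>. The Bol identity makes
  \<open>R\<^sub>h\<close> an element of order 3 with \<open>R\<^sub>h\<^sup>2 = R\<^sub>g\<close>. If \<open>z\<close> does not commute with \<open>h\<close>, the hypothesis on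
  \<open>T\<^sub>z\<close> forces \<open>T\<^sub>z(h) = g\<close>, i.e. \<open>hz = zg\<close>, and the Bol identity then yields
  \<open>(ah)z = (az)g\<close> and \<open>(ag)z = (az)h\<close> for all \<open>a\<close>. Since \<open>h\<close> lies in the left nucleus, the
  right translation by such a \<open>z\<close> interchanges the centralizer of \<open>h\<close> with its complement,
  so \<open>|Q|\<close> would be even.
\<close>

lemma even_card_if_inj_swaps:
  assumes "finite S" and "inj_on f S" and "A \<subseteq> S"
    and "f ` A \<subseteq> S - A" and "f ` (S - A) \<subseteq> A"
  shows "even (card S)"
proof -
  have "card A \<le> card (S - A)"
    using assms by (intro card_inj_on_le[of f]) (auto intro: inj_on_subset)
  moreover have "card (S - A) \<le> card A"
    using assms by (intro card_inj_on_le[of f]) (auto intro: inj_on_subset finite_subset)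
  moreover have "card S = card A + card (S - A)"
    using assms by (metis card_Diff_subset finite_subset card_mono le_add_diff_inverse)
  ultimately show ?thesis by simp
qed

locale loop_struct =
  fixes Q :: "'a set" and m :: "'a \<Rightarrow> 'a \<Rightarrow> 'a" (infixl \<open>\<cdot>\<close> 70) and e :: 'a
  assumes loop: "loop Q m e"
begin

lemma mult_closed [intro]: "x \<in> Q \<Longrightarrow> y \<in> Q \<Longrightarrow> x \<cdot> y \<in> Q"
  using loop by (simp add: loop_def)

lemma unit_closed [intro]: "e \<in> Q"
  using loop by (simp add: loop_def)

lemma left_unit [simp]: "x \<in> Q \<Longrightarrow> e \<cdot> x = x"
  and right_unit [simp]: "x \<in> Q \<Longrightarrow> x \<cdot> e = x"
  using loop by (simp_all add: loop_def)

lemma bij_left_mult: "x \<in> Q \<Longrightarrow> bij_betw (\<lambda>y. x \<cdot> y) Q Q"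
  and bij_right_mult: "x \<in> Q \<Longrightarrow> bij_betw (\<lambda>y. y \<cdot> x) Q Q"
  using loop by (simp_all add: loop_def)

lemma left_cancel: "x \<in> Q \<Longrightarrow> y \<in> Q \<Longrightarrow> z \<in> Q \<Longrightarrow> x \<cdot> y = x \<cdot> z \<longleftrightarrow> y = z"
  using bij_left_mult bij_betw_imp_inj_on inj_on_eq_iff by metis

lemma right_cancel: "x \<in> Q \<Longrightarrow> y \<in> Q \<Longrightarrow> z \<in> Q \<Longrightarrow> y \<cdot> x = z \<cdot> x \<longleftrightarrow> y = z"
  using bij_right_mult bij_betw_imp_inj_on inj_on_eq_iff by metis

lemma mult_eq_left_iff: "x \<in> Q \<Longrightarrow> y \<in> Q \<Longrightarrow> x \<cdot> y = x \<longleftrightarrow> y = e"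
  using left_cancel[of x y e] by auto

lemma mult_eq_right_iff: "x \<in> Q \<Longrightarrow> y \<in> Q \<Longrightarrow> x \<cdot> y = y \<longleftrightarrow> x = e"
  using right_cancel[of y x e] by auto

lemma T_map_eq_iff:
  assumes x: "x \<in> Q" and y: "y \<in> Q" and t: "t \<in> Q"
  shows "T_map Q m x y = t \<longleftrightarrow> x \<cdot> t = y \<cdot> x"
proof -
  have "(\<lambda>u. x \<cdot> u) ` Q = Q" using bij_left_mult[OF x] by (simp add: bij_betw_def)
  then obtain s where s: "s \<in> Q" "x \<cdot> s = y \<cdot> x" using mult_closed[OF y x] by force
  have "T_map Q m x y = s"
    unfolding T_map_def ldiv_def
  proof (rule the_equality)
    show "s \<in> Q \<and> x \<cdot> s = y \<cdot> x" using s by blast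
    show "u = s" if "u \<in> Q \<and> x \<cdot> u = y \<cdot> x" for u
      using that s left_cancel[OF x] by metis
  qed
  then show ?thesis using s left_cancel[OF x t s(1)] by auto
qed

lemma order3_subgroup:
  assumes H: "subloop_group Q m e H" and card: "card H = 3"
    and h: "h \<in> H" "h \<noteq> e"
  shows "H = {e, h, h \<cdot> h}" and "h \<cdot> h \<cdot> h = e"
proof -
  have HQ: "H \<subseteq> Q" and eH: "e \<in> H" and closed: "\<And>x y. x \<in> H \<Longrightarrow> y \<in> H \<Longrightarrow> x \<cdot> y \<in> H"
    and assoc: "\<And>x y z. x \<in> H \<Longrightarrow> y \<in> H \<Longrightarrow> z \<in> H \<Longrightarrow> x \<cdot> (y \<cdot> z) = x \<cdot> y \<cdot> z"
    using H by (auto simp: subloop_group_def)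
  have fin: "finite H" using card card.infinite by fastforce
  have hQ: "h \<in> Q" using h HQ by blast
  have three: "H = {e, h, k}" if "k \<in> H" "k \<noteq> e" "k \<noteq> h" for k
    using that eH h card fin by (intro card_subset_eq[symmetric]) auto
  have hh_ne_h: "h \<cdot> h \<noteq> h" using mult_eq_left_iff hQ h by blast
  have hh_ne_e: "h \<cdot> h \<noteq> e"
  proof
    assume hh: "h \<cdot> h = e"
    obtain k where k: "k \<in> H" "k \<noteq> e" "k \<noteq> h"
    proof -
      have "card {e, h} \<le> 2" by (cases "e = h") auto
      then have "\<not> H \<subseteq> {e, h}" using card card_mono[of "{e, h}" H] by auto
      then show ?thesis using that by blast
    qed
    have kQ: "k \<in> Q" using k HQ by blast
    have "h \<cdot> k \<in> {e, h, k}" using closed h k three by blast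
    moreover have "h \<cdot> k \<noteq> e" using hh left_cancel[OF hQ kQ hQ] k by auto
    ultimately show False using mult_eq_left_iff mult_eq_right_iff hQ kQ h k by auto
  qed
  have hhH: "h \<cdot> h \<in> H" using closed h by blast
  show Hcyc: "H = {e, h, h \<cdot> h}" using three[OF hhH hh_ne_e hh_ne_h] .
  have "h \<cdot> (h \<cdot> h) \<in> {e, h, h \<cdot> h}" using closed[OF h(1) hhH] Hcyc by simp
  moreover have "h \<cdot> (h \<cdot> h) \<noteq> h" using mult_eq_left_iff[of h "h \<cdot> h"] hQ hh_ne_e by auto
  moreover have "h \<cdot> (h \<cdot> h) \<noteq> h \<cdot> h" using mult_eq_right_iff[of h "h \<cdot> h"] hQ h by auto
  ultimately have "h \<cdot> (h \<cdot> h) = e" by blast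
  then show "h \<cdot> h \<cdot> h = e" using assoc h by simp
qed

end

locale right_bol_loop = loop_struct +
  assumes right_bol: "right_bol Q m"
begin

lemma bol: "x \<in> Q \<Longrightarrow> y \<in> Q \<Longrightarrow> z \<in> Q \<Longrightarrow> x \<cdot> y \<cdot> z \<cdot> y = x \<cdot> (y \<cdot> z \<cdot> y)"
  using right_bol by (simp add: right_bol_def)

lemma right_alternative: "x \<in> Q \<Longrightarrow> y \<in> Q \<Longrightarrow> x \<cdot> y \<cdot> y = x \<cdot> (y \<cdot> y)"
  using bol[of x y e] by (simp add: unit_closed mult_closed)

lemma right_mult_order3:
  assumes a: "a \<in> Q" and h: "h \<in> Q" and h3: "h \<cdot> h \<cdot> h = e"
  shows "a \<cdot> (h \<cdot> h) \<cdot> h = a"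
    and "a \<cdot> h \<cdot> (h \<cdot> h) = a"
    and "a \<cdot> (h \<cdot> h) \<cdot> (h \<cdot> h) = a \<cdot> h"
proof -
  have cube: "x \<cdot> h \<cdot> h \<cdot> h = x" if "x \<in> Q" for x
    using bol[of x h h] that h h3 by simp
  show "a \<cdot> (h \<cdot> h) \<cdot> h = a" using cube[OF a] right_alternative[OF a h] by simp
  show "a \<cdot> h \<cdot> (h \<cdot> h) = a"
    using cube[OF a] right_alternative[of "a \<cdot> h" h] a h by (simp add: mult_closed)
  have "h \<cdot> h \<cdot> h \<cdot> h = h \<cdot> h \<cdot> (h \<cdot> h)" by (rule right_alternative) (use h in auto)
  then have "h \<cdot> h \<cdot> (h \<cdot> h) = h" using h3 h by simp
  then show "a \<cdot> (h \<cdot> h) \<cdot> (h \<cdot> h) = a \<cdot> h"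
    using right_alternative[OF a mult_closed[OF h h]] by simp
qed

lemma twisted_commutation:
  assumes h: "h \<in> Q" "h \<cdot> h \<cdot> h = e" and z: "z \<in> Q" "h \<cdot> z = z \<cdot> (h \<cdot> h)" and a: "a \<in> Q"
  shows "a \<cdot> h \<cdot> z = a \<cdot> z \<cdot> (h \<cdot> h)" and "a \<cdot> (h \<cdot> h) \<cdot> z = a \<cdot> z \<cdot> h"
proof -
  have first: "x \<cdot> h \<cdot> z = x \<cdot> z \<cdot> (h \<cdot> h)" if x: "x \<in> Q" for x
  proof -
    have "x \<cdot> h \<cdot> z \<cdot> h = x \<cdot> (z \<cdot> (h \<cdot> h) \<cdot> h)" using bol[of x h z] x h z by simp
    also have "\<dots> = x \<cdot> z" using right_mult_order3(1) h z by simp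
    finally have "x \<cdot> h \<cdot> z \<cdot> h \<cdot> (h \<cdot> h) = x \<cdot> z \<cdot> (h \<cdot> h)" by simp
    moreover have "x \<cdot> h \<cdot> z \<cdot> h \<cdot> (h \<cdot> h) = x \<cdot> h \<cdot> z"
      using right_mult_order3(2)[of "x \<cdot> h \<cdot> z" h] x h z by blast
    ultimately show ?thesis by simp
  qed
  show "a \<cdot> h \<cdot> z = a \<cdot> z \<cdot> (h \<cdot> h)" using first a .
  have "a \<cdot> (h \<cdot> h) \<cdot> z = a \<cdot> h \<cdot> z \<cdot> (h \<cdot> h)"
    using first[of "a \<cdot> h"] right_alternative a h by auto
  also have "\<dots> = a \<cdot> z \<cdot> h" using first a right_mult_order3(3) h z by auto
  finally show "a \<cdot> (h \<cdot> h) \<cdot> z = a \<cdot> z \<cdot> h" .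
qed

lemma nuclear_order3_in_commutant:
  assumes fin: "finite Q" and odd: "odd (card Q)"
    and hN: "h \<in> left_nucleus Q m" and h3: "h \<cdot> h \<cdot> h = e"
    and T: "\<forall>z\<in>Q. T_map Q m z h \<in> {e, h, h \<cdot> h}"
  shows "h \<in> commutant Q m"
proof (rule ccontr)
  assume "h \<notin> commutant Q m"
  have hQ: "h \<in> Q" and nuc: "\<And>y z. y \<in> Q \<Longrightarrow> z \<in> Q \<Longrightarrow> h \<cdot> (y \<cdot> z) = h \<cdot> y \<cdot> z"
    using hN by (auto simp: left_nucleus_def)
  then obtain x where x: "x \<in> Q" "h \<cdot> x \<noteq> x \<cdot> h"
    using \<open>h \<notin> commutant Q m\<close> by (auto simp: commutant_def)
  have hhQ: "h \<cdot> h \<in> Q" using hQ by blast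
  have twist: "h \<cdot> z = z \<cdot> (h \<cdot> h)" if z: "z \<in> Q" "h \<cdot> z \<noteq> z \<cdot> h" for z
  proof -
    have "T_map Q m z h \<noteq> e"
    proof
      assume "T_map Q m z h = e"
      then have "h \<cdot> z = z" using T_map_eq_iff[OF z(1) hQ unit_closed] z(1) by simp
      then have "h = e" using mult_eq_right_iff hQ z(1) by blast
      then show False using z by simp
    qed
    moreover have "T_map Q m z h \<noteq> h" using T_map_eq_iff[OF z(1) hQ hQ] z by auto
    ultimately have "T_map Q m z h = h \<cdot> h" using T z(1) by blast
    then show ?thesis using T_map_eq_iff[OF z(1) hQ hhQ] by simp
  qed
  have x_twist: "a \<cdot> h \<cdot> x = a \<cdot> x \<cdot> (h \<cdot> h)" "a \<cdot> (h \<cdot> h) \<cdot> x = a \<cdot> x \<cdot> h" if "a \<in> Q" for a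
    using twisted_commutation[OF hQ h3 x(1) twist[OF x] that] by blast+
  have hh_ne_h: "h \<cdot> h \<noteq> h" using x hQ mult_eq_left_iff by auto
  let ?C = "{y \<in> Q. h \<cdot> y = y \<cdot> h}"
  have "even (card Q)"
  proof (rule even_card_if_inj_swaps)
    show "inj_on (\<lambda>y. y \<cdot> x) Q" using bij_right_mult x bij_betw_imp_inj_on by blast
    show "(\<lambda>y. y \<cdot> x) ` ?C \<subseteq> Q - ?C"
    proof (rule image_subsetI)
      fix y assume "y \<in> ?C"
      then have y: "y \<in> Q" "h \<cdot> y = y \<cdot> h" by auto
      have "h \<cdot> (y \<cdot> x) = y \<cdot> x \<cdot> (h \<cdot> h)"
        using nuc[OF y(1) x(1)] y(2) x_twist(1)[OF y(1)] by simp
      moreover have "y \<cdot> x \<cdot> (h \<cdot> h) \<noteq> y \<cdot> x \<cdot> h"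
        using left_cancel[of "y \<cdot> x" "h \<cdot> h" h] y(1) x(1) hQ hhQ hh_ne_h by auto
      ultimately show "y \<cdot> x \<in> Q - ?C" using y(1) x(1) by auto
    qed
    show "(\<lambda>y. y \<cdot> x) ` (Q - ?C) \<subseteq> ?C"
    proof (rule image_subsetI)
      fix y assume "y \<in> Q - ?C"
      then have y: "y \<in> Q" "h \<cdot> y \<noteq> y \<cdot> h" by auto
      have "h \<cdot> (y \<cdot> x) = y \<cdot> (h \<cdot> h) \<cdot> x" using nuc[OF y(1) x(1)] twist[OF y] by simp
      also have "\<dots> = y \<cdot> x \<cdot> h" using x_twist(2)[OF y(1)] .
      finally show "y \<cdot> x \<in> ?C" using y(1) x(1) by auto
    qed
  qed (use fin in auto)
  with odd show False by simp
qed

end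

theorem lemma4p10:
  fixes Q :: "'a set" and m :: "'a \<Rightarrow> 'a \<Rightarrow> 'a" and e :: 'a and H :: "'a set"
  assumes "loop Q m e"
    and "right_bol Q m"
    and "finite Q"
    and "odd (card Q)"
    and "subloop_group Q m e H"
    and "H \<subseteq> left_nucleus Q m"
    and "card H = 3"
    and "\<forall>x\<in>Q. T_map Q m x ` H \<subseteq> H"
  shows "H \<subseteq> commutant Q m"
proof
  interpret right_bol_loop Q m e using assms(1,2) by unfold_locales
  fix h assume h: "h \<in> H"
  show "h \<in> commutant Q m"
  proof (cases "h = e")
    case True
    then show ?thesis by (auto simp: commutant_def)
  next
    case False
    have "H = {e, h, m h h}" and h3: "m (m h h) h = e"
      using order3_subgroup[OF assms(5,7) h False] by blast+
    then have "\<forall>z\<in>Q. T_map Q m z h \<in> {e, h, m h h}" using assms(8) h by blast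
    moreover have "h \<in> left_nucleus Q m" using assms(6) h by blast
    ultimately show ?thesis using nuclear_order3_in_commutant[OF assms(3,4) _ h3] by blast
  qed
qed

end
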